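(* Let $k\ge5$ and $x\in(1/4,1/2)$, and suppose the initial candidate distribution $F_0$ on $[0,1]$ is symmetric about $1/2$ and places probability mass $p$ at $x$ and mass $p$ at $1-x$. Then there exists $p^*_k<1/2$ such that if $p>p^*_k$, under the replicator dynamics with left–right tie-breaking the candidate distribution converges to point masses at $x$ and $1-x$ (i.e., the mass $F_{k,t}$ places at each of $x$ and $1-x$ tends to $1/2$ as $t\to\infty$). Moreover, one of the fixed points of the map $p\mapsto (2p)^k/2+k(1-2p)\left((2p)^{k-1}-2p^{k-1}\right)/2$ is such a $p^*_k$.
   Context: Voters form a continuum uniformly distributed on $[0,1]$, each voting for the nearest occupied point. The vote share allocated to an occupied point is the measure of voters whose nearest occupied point it is; it splits into a left part (voters to its left) and a right part (voters to its right). Left–right tie-breaking: if several candidates occupy the same point, one of them chosen uniformly at random receives the entire left part of that point's vote share and a different one chosen uniformly at random receives the entire right part; the others receive nothing. (A single candidate at a point receives both parts.) The plurality winner is the candidate with the largest vote share, ties broken uniformly at random. Replicator dynamics: given a probability distribution $F_0$ on $[0,1]$ and integer $k\ge2$, set $F_{k,0}=F_0$ and for $t\ge1$ let $F_{k,t}$ be the distribution of the position of the plurality winner among $k$ candidates whose positions are i.i.d. with distribution $F_{k,t-1}$. *)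

theory Defs
  imports "HOL-Probability.Probability"
begin

text \<open>A configuration of k candidates is a function pos :: nat \<Rightarrow> real, candidate i < k
  sitting at pos i.  Voters are uniform on [0,1].\<close>

definition occupied :: "nat \<Rightarrow> (nat \<Rightarrow> real) \<Rightarrow> real set" where
  "occupied k pos = pos ` {..<k}"

text \<open>Left part of the vote share of an occupied point p: voters in [0,1] to the left of p
  whose nearest occupied point is p.\<close>
definition left_part :: "nat \<Rightarrow> (nat \<Rightarrow> real) \<Rightarrow> real \<Rightarrow> real" where
  "left_part k pos p =
     (let L = {q \<in> occupied k pos. q < p} in if L = {} then p else (p - Max L) / 2)"

definition right_part :: "nat \<Rightarrow> (nat \<Rightarrow> real) \<Rightarrow> real \<Rightarrow> real" where
  "right_part k pos p =
     (let R = {q \<in> occupied k pos. p < q} in if R = {} then 1 - p else (Min R - p) / 2)"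

text \<open>Left-right tie-breaking at point p: an ordered pair (receiver of left part, receiver of
  right part); distinct candidates if several occupy p, the unique one otherwise.\<close>
definition tb_pairs :: "nat \<Rightarrow> (nat \<Rightarrow> real) \<Rightarrow> real \<Rightarrow> (nat \<times> nat) set" where
  "tb_pairs k pos p =
     {(a, b). a < k \<and> b < k \<and> pos a = p \<and> pos b = p \<and>
              (a \<noteq> b \<or> card {j. j < k \<and> pos j = p} = 1)}"

text \<open>All joint tie-breaking outcomes (uniformly distributed, independently over points).\<close>
definition tb_choices :: "nat \<Rightarrow> (nat \<Rightarrow> real) \<Rightarrow> (real \<Rightarrow> nat \<times> nat) set" where
  "tb_choices k pos = PiE (occupied k pos) (tb_pairs k pos)"

definition share :: "nat \<Rightarrow> (nat \<Rightarrow> real) \<Rightarrow> (real \<Rightarrow> nat \<times> nat) \<Rightarrow> nat \<Rightarrow> real" where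
  "share k pos \<sigma> i =
     (if fst (\<sigma> (pos i)) = i then left_part k pos (pos i) else 0) +
     (if snd (\<sigma> (pos i)) = i then right_part k pos (pos i) else 0)"

definition winners :: "nat \<Rightarrow> (nat \<Rightarrow> real) \<Rightarrow> (real \<Rightarrow> nat \<times> nat) \<Rightarrow> nat set" where
  "winners k pos \<sigma> = {i. i < k \<and> (\<forall>j<k. share k pos \<sigma> j \<le> share k pos \<sigma> i)}"

definition win_prob :: "nat \<Rightarrow> (nat \<Rightarrow> real) \<Rightarrow> nat \<Rightarrow> real" where
  "win_prob k pos i =
     (\<Sum>\<sigma>\<in>tb_choices k pos.
        (if i \<in> winners k pos \<sigma> then 1 / real (card (winners k pos \<sigma>)) else 0))
     / real (card (tb_choices k pos))"

definition winner_dist :: "nat \<Rightarrow> real measure \<Rightarrow> real measure" where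
  "winner_dist k F = measure_of UNIV (sets borel)
     (\<lambda>A. \<integral>\<^sup>+ pos. ennreal (\<Sum>i<k. win_prob k pos i * indicator A (pos i))
            \<partial>(PiM {..<k} (\<lambda>_. F)))"

definition replicator :: "nat \<Rightarrow> real measure \<Rightarrow> nat \<Rightarrow> real measure" where
  "replicator k F0 t = (winner_dist k ^^ t) F0"

definition fp_map :: "nat \<Rightarrow> real \<Rightarrow> real" where
  "fp_map k p = (2*p)^k / 2 + real k * (1 - 2*p) * ((2*p)^(k-1) - 2 * p^(k-1)) / 2"

end

theory Submission
  imports Defs
begin

text \<open>Let s be the common mass of the atoms at x and 1 - x. The plurality winner certainly sits
  at x or 1 - x if all k candidates do, and also if exactly one candidate sits elsewhere while
  both x and 1 - x are occupied: that outsider's vote share is below x, whereas on the side away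
  from the outsider the candidate receiving the outer part of x or 1 - x collects at least x.
  These events have probabilities (2s)^k and k (1 - 2s)((2s)^(k-1) - 2 s^(k-1)), and the
  dynamics preserves symmetry about 1/2, so one step raises the mass at x from s to at least
  \<open>fp_map k s\<close>. Since \<open>fp_map k\<close> fixes 1/2 with derivative 4k/2^k < 1 there, it lies
  above the diagonal on an interval (p*, 1/2) whose left end is a fixed point; starting above p*
  the mass increases to a fixed point in (p*, 1/2], which can only be 1/2.\<close>

section \<open>The map \<open>fp_map\<close>\<close>

lemma four_mult_less_two_power: "5 \<le> n \<Longrightarrow> 4 * real n < 2 ^ n"
  by (induction n rule: dec_induct) simp_all

lemma isCont_fp_map: "isCont (fp_map k) p"
  unfolding fp_map_def by (intro continuous_intros) auto

lemma fp_map_half: "fp_map k (1/2) = 1/2"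
  unfolding fp_map_def by simp

lemma fp_map_zero: "2 \<le> k \<Longrightarrow> fp_map k 0 = 0"
  unfolding fp_map_def by (simp add: power_0_left)

lemma fp_map_has_real_derivative_half:
  assumes "2 \<le> k"
  shows "(fp_map k has_real_derivative 4 * real k / 2 ^ k) (at (1/2))"
proof -
  have "(fp_map k has_real_derivative real k - real k * (1 - 2 * (1/2) ^ (k - 1))) (at (1/2))"
    unfolding fp_map_def[abs_def]
    by (rule derivative_eq_intros refl | simp)+
  moreover have "(1/2::real) ^ (k - 1) = 2 / 2 ^ k"
    using assms by (cases k) (simp_all add: power_divide)
  ultimately show ?thesis by (simp add: algebra_simps)
qed

lemma last_zero_before_downcrossing:
  fixes h :: "real \<Rightarrow> real"
  assumes cont: "continuous_on {a..b} h" and "a < b" "h a = 0" "h b = 0"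
    and deriv: "(h has_real_derivative D) (at b)" and "D < 0"
  shows "\<exists>c. a \<le> c \<and> c < b \<and> h c = 0 \<and> (\<forall>p. c < p \<and> p < b \<longrightarrow> 0 < h p)"
proof -
  obtain d where "d > 0" and d: "\<And>t. 0 < t \<Longrightarrow> t < d \<Longrightarrow> h b < h (b - t)"
    using DERIV_neg_dec_left[OF deriv \<open>D < 0\<close>] by blast
  define e where "e = min d (b - a)"
  have e: "0 < e" "e \<le> b - a" using \<open>d > 0\<close> \<open>a < b\<close> by (auto simp: e_def)
  have near_b: "0 < h p" if "b - e < p" "p < b" for p
    using d[of "b - p"] that \<open>h b = 0\<close> by (simp add: e_def)
  define Z where "Z = {p \<in> {a..b - e/2}. h p = 0}"
  have "closed Z"
    unfolding Z_def using e
    by (intro continuous_closed_preimage_constant continuous_on_subset[OF cont]) auto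
  moreover have "a \<in> Z" using e \<open>h a = 0\<close> by (simp add: Z_def)
  moreover have "bdd_above Z" by (auto simp: Z_def bdd_above_def)
  ultimately have "Sup Z \<in> Z" and Sup_ge: "\<And>p. p \<in> Z \<Longrightarrow> p \<le> Sup Z"
    using closed_contains_Sup cSup_upper by blast+
  have "0 < h p" if "Sup Z < p" "p < b" for p
  proof (rule ccontr)
    assume "\<not> 0 < h p"
    then have "p \<le> b - e" using near_b[of p] \<open>p < b\<close> by linarith
    moreover have "0 < h (b - e/2)" using near_b e by simp
    moreover have "a \<le> p" using Sup_ge[OF \<open>a \<in> Z\<close>] that by linarith
    then have "continuous_on {p..b - e/2} h" using e by (intro continuous_on_subset[OF cont]) auto
    ultimately obtain q where q: "p \<le> q" "q \<le> b - e/2" "h q = 0"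
      using IVT'[of h p 0 "b - e/2"] \<open>\<not> 0 < h p\<close> e by force
    then have "q \<in> Z" using Sup_ge[OF \<open>a \<in> Z\<close>] that by (auto simp: Z_def)
    then show False using Sup_ge[of q] q that by linarith
  qed
  then show ?thesis using \<open>Sup Z \<in> Z\<close> e by (intro exI[of _ "Sup Z"]) (auto simp: Z_def)
qed

lemma fp_map_fixed_point_below_half:
  assumes "5 \<le> k"
  shows "\<exists>pstar<1/2. fp_map k pstar = pstar \<and> (\<forall>p. pstar < p \<and> p < 1/2 \<longrightarrow> p < fp_map k p)"
proof -
  have "4 * real k / 2 ^ k - 1 < 0"
    using four_mult_less_two_power[OF assms] by (simp add: field_simps)
  moreover have "((\<lambda>p. fp_map k p - p) has_real_derivative 4 * real k / 2 ^ k - 1) (at (1/2))"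
    using assms by (intro derivative_intros fp_map_has_real_derivative_half) simp
  moreover have "continuous_on {0..1/2} (\<lambda>p. fp_map k p - p)"
    by (intro continuous_intros continuous_at_imp_continuous_on ballI isCont_fp_map)
  ultimately show ?thesis
    using last_zero_before_downcrossing[of 0 "1/2" "\<lambda>p. fp_map k p - p"] assms
    by (force simp: fp_map_zero fp_map_half)
qed

lemma increasing_orbit_tendsto_fixed_point:
  fixes f :: "real \<Rightarrow> real" and q :: "nat \<Rightarrow> real"
  assumes cont: "\<And>p. isCont f p" and above: "\<And>p. c < p \<Longrightarrow> p < b \<Longrightarrow> p < f p" and "f b = b"
    and bounded: "\<And>t. q t \<le> b" and step: "\<And>t. f (q t) \<le> q (Suc t)" and "c < q 0"
  shows "q \<longlonglongrightarrow> b"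
proof -
  have le_f: "p \<le> f p" if "c < p" "p \<le> b" for p
    using above[of p] that \<open>f b = b\<close> by (cases "p < b") auto
  have grows: "c < q t \<and> q t \<le> q (Suc t)" for t
  proof (induction t)
    case 0 show ?case using le_f[of "q 0"] step[of 0] bounded[of 0] \<open>c < q 0\<close> by simp
  next
    case (Suc t) then show ?case
      using le_f[of "q (Suc t)"] step[of "Suc t"] bounded[of "Suc t"] by simp
  qed
  then have "incseq q" by (intro incseq_SucI) simp
  then obtain L where L: "q \<longlonglongrightarrow> L" and q_le_L: "\<And>t. q t \<le> L"
    using incseq_convergent[of q b] bounded by blast
  have "L \<le> b" using LIMSEQ_le_const2[OF L] bounded by blast
  have "c < L" using grows[of 0] q_le_L[of 0] by simp
  have "f L \<le> L"
  proof (rule LIMSEQ_le)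
    show "(\<lambda>t. f (q t)) \<longlonglongrightarrow> f L" by (rule isCont_tendsto_compose[OF cont L])
    show "(\<lambda>t. q (Suc t)) \<longlonglongrightarrow> L" by (rule LIMSEQ_Suc[OF L])
  qed (use step in blast)
  then have "L = b" using above[of L] \<open>c < L\<close> \<open>L \<le> b\<close> by force
  then show ?thesis using L by simp
qed

section \<open>Win probabilities of a fixed configuration\<close>

lemma tb_pairs_at_iff:
  assumes "i < k"
  shows "(a, b) \<in> tb_pairs k pos (pos i) \<longleftrightarrow> a < k \<and> b < k \<and> pos a = pos i \<and> pos b = pos i \<and>
    (a \<noteq> b \<or> (\<forall>l<k. pos l = pos i \<longrightarrow> l = i))"
proof -
  have "card {j. j < k \<and> pos j = pos i} = 1 \<longleftrightarrow> {j. j < k \<and> pos j = pos i} = {i}"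
    using assms by (metis (mono_tags, lifting) card_1_singletonE card.empty card_insert_disjoint
        empty_iff finite.emptyI insertE mem_Collect_eq One_nat_def)
  then show ?thesis unfolding tb_pairs_def by auto
qed

lemma tb_choice_in_tb_pairs:
  "\<sigma> \<in> tb_choices k pos \<Longrightarrow> i < k \<Longrightarrow> \<sigma> (pos i) \<in> tb_pairs k pos (pos i)"
  unfolding tb_choices_def occupied_def by (auto simp: PiE_iff)

lemma finite_tb_choices: "finite (tb_choices k pos)"
proof -
  have "tb_choices k pos \<subseteq> occupied k pos \<rightarrow>\<^sub>E {..<k} \<times> {..<k}"
    unfolding tb_choices_def tb_pairs_def by (intro PiE_mono) auto
  moreover have "finite (occupied k pos \<rightarrow>\<^sub>E {..<k} \<times> {..<k})"
    by (intro finite_PiE) (auto simp: occupied_def)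
  ultimately show ?thesis by (rule finite_subset)
qed

lemma tb_choices_nonempty: "tb_choices k pos \<noteq> {}"
proof -
  have "tb_pairs k pos (pos i) \<noteq> {}" if "i < k" for i
  proof (cases "\<forall>l<k. pos l = pos i \<longrightarrow> l = i")
    case True
    then have "(i, i) \<in> tb_pairs k pos (pos i)" using tb_pairs_at_iff[OF that] that by blast
    then show ?thesis by blast
  next
    case False
    then obtain l where "l < k" "pos l = pos i" "l \<noteq> i" by auto
    then have "(i, l) \<in> tb_pairs k pos (pos i)" using tb_pairs_at_iff[OF that] that by blast
    then show ?thesis by blast
  qed
  then show ?thesis unfolding tb_choices_def PiE_eq_empty_iff occupied_def by blast
qed

lemma winners_nonempty:
  assumes "0 < k" shows "winners k pos \<sigma> \<noteq> {}"
proof -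
  have ne: "share k pos \<sigma> ` {..<k} \<noteq> {}" using assms by auto
  obtain i where "i < k" and "share k pos \<sigma> i = Max (share k pos \<sigma> ` {..<k})"
    using Max_in[OF _ ne] by auto
  then have "i \<in> winners k pos \<sigma>" unfolding winners_def by simp
  then show ?thesis by blast
qed

lemma win_prob_nonneg: "0 \<le> win_prob k pos i"
  unfolding win_prob_def by (intro divide_nonneg_nonneg sum_nonneg) auto

lemma sum_win_prob:
  assumes "0 < k" shows "(\<Sum>i<k. win_prob k pos i) = 1"
proof -
  have shares_one: "(\<Sum>i<k. if i \<in> winners k pos \<sigma> then 1 / real (card (winners k pos \<sigma>)) else 0) = 1" for \<sigma>
  proof -
    have "winners k pos \<sigma> \<subseteq> {..<k}" by (auto simp: winners_def)
    moreover have "card (winners k pos \<sigma>) \<noteq> 0"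
      using winners_nonempty[OF assms] finite_subset[OF \<open>winners k pos \<sigma> \<subseteq> {..<k}\<close>] by auto
    ultimately show ?thesis by (simp add: sum.If_cases Int_absorb1)
  qed
  have "card (tb_choices k pos) \<noteq> 0" using finite_tb_choices tb_choices_nonempty by auto
  then show ?thesis
    unfolding win_prob_def sum_divide_distrib[symmetric] by (subst sum.swap) (simp add: shares_one)
qed

lemma win_prob_cong:
  assumes "\<And>j. j < k \<Longrightarrow> pos j = pos' j"
  shows "win_prob k pos i = win_prob k pos' i"
proof -
  have occ: "occupied k pos = occupied k pos'" unfolding occupied_def using assms by auto
  have "tb_pairs k pos = tb_pairs k pos'"
  proof (intro ext)
    fix p
    have "{j. j < k \<and> pos j = p} = {j. j < k \<and> pos' j = p}" using assms by auto
    then show "tb_pairs k pos p = tb_pairs k pos' p" unfolding tb_pairs_def using assms by auto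
  qed
  then have tb: "tb_choices k pos = tb_choices k pos'" unfolding tb_choices_def occ by simp
  have "left_part k pos = left_part k pos'" "right_part k pos = right_part k pos'"
    unfolding left_part_def right_part_def occ by simp_all
  then have "share k pos \<sigma> j = share k pos' \<sigma> j" if "j < k" for \<sigma> j
    unfolding share_def using assms[OF that] by simp
  then have "winners k pos \<sigma> = winners k pos' \<sigma>" for \<sigma> unfolding winners_def by auto
  then show ?thesis unfolding win_prob_def tb by presburger
qed

lemma occupied_reflect: "occupied k (\<lambda>j. 1 - pos j) = (\<lambda>q. 1 - q) ` occupied k pos"
  unfolding occupied_def by (simp add: image_image)

lemma Max_reflect:
  fixes R :: "real set"
  assumes "finite R" "R \<noteq> {}"
  shows "Max ((\<lambda>q. 1 - q) ` R) = 1 - Min R"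
  using assms by (intro Max_eqI) (auto intro: Min_in)

lemma Min_reflect:
  fixes R :: "real set"
  assumes "finite R" "R \<noteq> {}"
  shows "Min ((\<lambda>q. 1 - q) ` R) = 1 - Max R"
  using assms by (intro Min_eqI) (auto intro: Max_in)

lemma left_part_reflect: "left_part k (\<lambda>j. 1 - pos j) (1 - p) = right_part k pos p"
proof -
  define R where "R = {q \<in> occupied k pos. p < q}"
  have "{q \<in> occupied k (\<lambda>j. 1 - pos j). q < 1 - p} = (\<lambda>q. 1 - q) ` R"
    unfolding R_def occupied_reflect by auto
  moreover have "finite R" unfolding R_def occupied_def by simp
  ultimately show ?thesis
    unfolding left_part_def right_part_def Let_def R_def[symmetric] by (simp add: Max_reflect)
qed

lemma right_part_reflect: "right_part k (\<lambda>j. 1 - pos j) (1 - p) = left_part k pos p"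
proof -
  define L where "L = {q \<in> occupied k pos. q < p}"
  have "{q \<in> occupied k (\<lambda>j. 1 - pos j). 1 - p < q} = (\<lambda>q. 1 - q) ` L"
    unfolding L_def occupied_reflect by auto
  moreover have "finite L" unfolding L_def occupied_def by simp
  ultimately show ?thesis
    unfolding left_part_def right_part_def Let_def L_def[symmetric] by (simp add: Min_reflect)
qed

lemma tb_pairs_reflect:
  "(a, b) \<in> tb_pairs k (\<lambda>j. 1 - pos j) q \<longleftrightarrow> (b, a) \<in> tb_pairs k pos (1 - q)"
proof -
  have "{j. j < k \<and> 1 - pos j = q} = {j. j < k \<and> pos j = 1 - q}" by auto
  then show ?thesis unfolding tb_pairs_def by auto
qed

text \<open>Under \<open>y \<mapsto> 1 - y\<close> left parts become right parts, so the receivers are swapped.\<close>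

definition reflect_choice :: "nat \<Rightarrow> (nat \<Rightarrow> real) \<Rightarrow> (real \<Rightarrow> nat \<times> nat) \<Rightarrow> real \<Rightarrow> nat \<times> nat" where
  "reflect_choice k pos \<sigma> = (\<lambda>q \<in> occupied k (\<lambda>j. 1 - pos j). prod.swap (\<sigma> (1 - q)))"

lemma reflect_choice_in_tb_choices:
  assumes "\<sigma> \<in> tb_choices k pos"
  shows "reflect_choice k pos \<sigma> \<in> tb_choices k (\<lambda>j. 1 - pos j)"
  unfolding reflect_choice_def tb_choices_def
proof (rule restrict_PiE_iff[THEN iffD2], intro ballI)
  fix q assume "q \<in> occupied k (\<lambda>j. 1 - pos j)"
  then have "\<sigma> (1 - q) \<in> tb_pairs k pos (1 - q)"
    using assms unfolding tb_choices_def occupied_reflect by auto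
  then show "prod.swap (\<sigma> (1 - q)) \<in> tb_pairs k (\<lambda>j. 1 - pos j) q"
    by (cases "\<sigma> (1 - q)") (simp add: tb_pairs_reflect)
qed

lemma reflect_choice_reflect_choice:
  assumes "\<sigma> \<in> tb_choices k pos"
  shows "reflect_choice k (\<lambda>j. 1 - pos j) (reflect_choice k pos \<sigma>) = \<sigma>"
proof
  fix q show "reflect_choice k (\<lambda>j. 1 - pos j) (reflect_choice k pos \<sigma>) q = \<sigma> q"
    using assms unfolding reflect_choice_def tb_choices_def occupied_reflect
    by (cases "q \<in> occupied k pos") (auto simp: PiE_def extensional_def image_image)
qed

lemma bij_betw_reflect_choice:
  "bij_betw (reflect_choice k pos) (tb_choices k pos) (tb_choices k (\<lambda>j. 1 - pos j))"
proof (rule bij_betw_byWitness[where f' = "reflect_choice k (\<lambda>j. 1 - pos j)"])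
  have "reflect_choice k pos (reflect_choice k (\<lambda>j. 1 - pos j) \<sigma>) = \<sigma>"
    if "\<sigma> \<in> tb_choices k (\<lambda>j. 1 - pos j)" for \<sigma>
    using reflect_choice_reflect_choice[OF that] by simp
  then show "\<forall>\<sigma>\<in>tb_choices k (\<lambda>j. 1 - pos j). reflect_choice k pos (reflect_choice k (\<lambda>j. 1 - pos j) \<sigma>) = \<sigma>"
    by blast
  have "reflect_choice k (\<lambda>j. 1 - pos j) \<sigma> \<in> tb_choices k pos"
    if "\<sigma> \<in> tb_choices k (\<lambda>j. 1 - pos j)" for \<sigma>
    using reflect_choice_in_tb_choices[OF that] by simp
  then show "reflect_choice k (\<lambda>j. 1 - pos j) ` tb_choices k (\<lambda>j. 1 - pos j) \<subseteq> tb_choices k pos"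
    by blast
  show "\<forall>\<sigma>\<in>tb_choices k pos. reflect_choice k (\<lambda>j. 1 - pos j) (reflect_choice k pos \<sigma>) = \<sigma>"
    using reflect_choice_reflect_choice by blast
  show "reflect_choice k pos ` tb_choices k pos \<subseteq> tb_choices k (\<lambda>j. 1 - pos j)"
    using reflect_choice_in_tb_choices by blast
qed

lemma share_reflect_choice:
  assumes "j < k"
  shows "share k (\<lambda>j. 1 - pos j) (reflect_choice k pos \<sigma>) j = share k pos \<sigma> j"
proof -
  have "reflect_choice k pos \<sigma> (1 - pos j) = prod.swap (\<sigma> (pos j))"
    using assms unfolding reflect_choice_def occupied_def by auto
  then show ?thesis
    unfolding share_def by (simp add: left_part_reflect right_part_reflect add.commute)
qed

lemma win_prob_reflect: "win_prob k (\<lambda>j. 1 - pos j) i = win_prob k pos i"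
proof -
  let ?pos' = "\<lambda>j. 1 - pos j"
  let ?w = "\<lambda>pos \<sigma>. if i \<in> winners k pos \<sigma> then 1 / real (card (winners k pos \<sigma>)) else 0"
  have w: "winners k ?pos' (reflect_choice k pos \<sigma>) = winners k pos \<sigma>" for \<sigma>
    unfolding winners_def by (auto simp: share_reflect_choice)
  have "(\<Sum>\<sigma>\<in>tb_choices k ?pos'. ?w ?pos' \<sigma>) = (\<Sum>\<sigma>\<in>tb_choices k pos. ?w pos \<sigma>)"
    using sum.reindex_bij_betw[OF bij_betw_reflect_choice[of k pos], of "?w ?pos'"]
    unfolding w by simp
  moreover have "card (tb_choices k ?pos') = card (tb_choices k pos)"
    using bij_betw_same_card[OF bij_betw_reflect_choice[of k pos]] by simp
  ultimately show ?thesis unfolding win_prob_def by simp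
qed

lemma left_part_nonneg: "0 \<le> p \<Longrightarrow> 0 \<le> left_part k pos p"
proof -
  assume "0 \<le> p"
  define L where "L = {q \<in> occupied k pos. q < p}"
  have "finite L" unfolding L_def occupied_def by simp
  then have "L \<noteq> {} \<Longrightarrow> Max L < p" using Max_in[of L] by (auto simp: L_def)
  then show ?thesis using \<open>0 \<le> p\<close> unfolding left_part_def Let_def L_def[symmetric]
    by (cases "L = {}") auto
qed

lemma right_part_nonneg: "p \<le> 1 \<Longrightarrow> 0 \<le> right_part k pos p"
proof -
  assume "p \<le> 1"
  define R where "R = {q \<in> occupied k pos. p < q}"
  have "finite R" unfolding R_def occupied_def by simp
  then have "R \<noteq> {} \<Longrightarrow> p < Min R" using Min_in[of R] by (auto simp: R_def)
  then show ?thesis using \<open>p \<le> 1\<close> unfolding right_part_def Let_def R_def[symmetric]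
    by (cases "R = {}") auto
qed

locale lone_outsider =
  fixes k :: nat and pos :: "nat \<Rightarrow> real" and x :: real and j :: nat
  assumes x: "x < 1/2" and j: "j < k" and outside: "pos j \<notin> {x, 1 - x}"
    and others: "\<And>i. i < k \<Longrightarrow> i \<noteq> j \<Longrightarrow> pos i \<in> {x, 1 - x}"
    and occupied_x: "x \<in> occupied k pos" and occupied_1x: "1 - x \<in> occupied k pos"
begin

lemma occupied_eq: "occupied k pos = {x, 1 - x, pos j}"
  using others j occupied_x occupied_1x unfolding occupied_def by fastforce

lemma share_outsider:
  assumes "\<sigma> \<in> tb_choices k pos"
  shows "share k pos \<sigma> j = left_part k pos (pos j) + right_part k pos (pos j)"
proof -
  have "\<sigma> (pos j) \<in> tb_pairs k pos (pos j)" by (rule tb_choice_in_tb_pairs[OF assms j])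
  moreover have "l = j" if "l < k" "pos l = pos j" for l using others[of l] outside that by auto
  ultimately have "\<sigma> (pos j) = (j, j)" using tb_pairs_at_iff[OF j] by (cases "\<sigma> (pos j)") auto
  then show ?thesis unfolding share_def by simp
qed

text \<open>This is where x > 1/4 is needed: an outsider between x and 1 - x collects (1 - 2x)/2.\<close>

lemma share_outsider_less:
  assumes "1/4 < x" "\<sigma> \<in> tb_choices k pos"
  shows "share k pos \<sigma> j < x"
proof -
  define y where "y = pos j"
  have "y \<noteq> x" "y \<noteq> 1 - x" using outside by (auto simp: y_def)
  then consider "y < x" | "x < y" "y < 1 - x" | "1 - x < y" by linarith
  then have "left_part k pos y + right_part k pos y < x"
  proof cases
    case 1
    then have "{q \<in> occupied k pos. q < y} = {}" "{q \<in> occupied k pos. y < q} = {x, 1 - x}"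
      using x unfolding occupied_eq y_def by auto
    then show ?thesis using 1 x unfolding left_part_def right_part_def by (simp add: min_def field_simps)
  next
    case 2
    then have "{q \<in> occupied k pos. q < y} = {x}" "{q \<in> occupied k pos. y < q} = {1 - x}"
      unfolding occupied_eq y_def by auto
    then show ?thesis using \<open>1/4 < x\<close> unfolding left_part_def right_part_def
      by (simp add: field_simps)
  next
    case 3
    then have "{q \<in> occupied k pos. q < y} = {x, 1 - x}" "{q \<in> occupied k pos. y < q} = {}"
      using x unfolding occupied_eq y_def by auto
    then show ?thesis using 3 x unfolding left_part_def right_part_def by (simp add: max_def field_simps)
  qed
  then show ?thesis using share_outsider[OF assms(2)] by (simp add: y_def)
qed

text \<open>On the side away from the outsider, the receiver of the outer part of x or 1 - x
  collects at least x.\<close>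

lemma exists_share_ge:
  assumes "\<sigma> \<in> tb_choices k pos"
  shows "\<exists>r<k. x \<le> share k pos \<sigma> r"
proof (cases "pos j < 1 - x")
  case True
  obtain a where a: "a < k" "pos a = 1 - x" using occupied_1x unfolding occupied_def by auto
  obtain l r where lr: "\<sigma> (1 - x) = (l, r)" by fastforce
  then have r: "r < k" "pos r = 1 - x"
    using tb_choice_in_tb_pairs[OF assms a(1)] tb_pairs_at_iff[where i=a and pos=pos] a by auto
  have "{q \<in> occupied k pos. 1 - x < q} = {}" using True x unfolding occupied_eq by auto
  then have "right_part k pos (1 - x) = x" unfolding right_part_def by simp
  moreover have "0 \<le> left_part k pos (1 - x)" using x by (intro left_part_nonneg) simp
  ultimately have "x \<le> share k pos \<sigma> r" unfolding share_def using lr r by simp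
  then show ?thesis using r by blast
next
  case False
  obtain a where a: "a < k" "pos a = x" using occupied_x unfolding occupied_def by auto
  obtain l r where lr: "\<sigma> x = (l, r)" by fastforce
  then have l: "l < k" "pos l = x"
    using tb_choice_in_tb_pairs[OF assms a(1)] tb_pairs_at_iff[where i=a and pos=pos] a by auto
  have "{q \<in> occupied k pos. q < x} = {}" using False x unfolding occupied_eq by auto
  then have "left_part k pos x = x" unfolding left_part_def by simp
  moreover have "0 \<le> right_part k pos x" using x by (intro right_part_nonneg) simp
  ultimately have "x \<le> share k pos \<sigma> l" unfolding share_def using lr l by simp
  then show ?thesis using l by blast
qed

lemma win_prob_outsider: "1/4 < x \<Longrightarrow> win_prob k pos j = 0"
  using share_outsider_less exists_share_ge unfolding win_prob_def winners_def
  by (fastforce intro!: sum.neutral)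

end

section \<open>Measurability of the win probabilities\<close>

text \<open>A Max over all candidates, those not left of \<open>pos j\<close> being replaced by the smallest
  position, makes the left part visibly measurable.\<close>

lemma left_part_eq_Max:
  assumes "j < k"
  shows "left_part k pos (pos j) = (if \<exists>l<k. pos l < pos j
     then (pos j - Max ((\<lambda>l. if pos l < pos j then pos l else Min (pos ` {..<k})) ` {..<k})) / 2
     else pos j)"
proof -
  let ?L = "{q \<in> occupied k pos. q < pos j}"
  have "Max ((\<lambda>l. if pos l < pos j then pos l else Min (pos ` {..<k})) ` {..<k}) = Max ?L"
    if "\<exists>l<k. pos l < pos j"
  proof (rule Max_eq_if)
    show "\<forall>a\<in>(\<lambda>l. if pos l < pos j then pos l else Min (pos ` {..<k})) ` {..<k}. \<exists>b\<in>?L. a \<le> b"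
      using that by (auto simp: occupied_def intro: order_trans[OF Min_le])
    show "\<forall>b\<in>?L. \<exists>a\<in>(\<lambda>l. if pos l < pos j then pos l else Min (pos ` {..<k})) ` {..<k}. b \<le> a"
      by (force simp: occupied_def)
  qed (auto simp: occupied_def)
  moreover have "?L = {} \<longleftrightarrow> \<not> (\<exists>l<k. pos l < pos j)" by (auto simp: occupied_def)
  ultimately show ?thesis unfolding left_part_def Let_def by auto
qed

lemma measurable_left_part:
  assumes "j < k" and pos: "\<And>l. l < k \<Longrightarrow> (\<lambda>\<omega>. pos \<omega> l) \<in> borel_measurable M"
  shows "(\<lambda>\<omega>. left_part k (pos \<omega>) (pos \<omega> j)) \<in> borel_measurable M"
proof -
  have less: "Measurable.pred M (\<lambda>\<omega>. pos \<omega> l < pos \<omega> j)" if "l < k" for l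
    unfolding Measurable.pred_def using that assms by (intro borel_measurable_less) auto
  have "Measurable.pred M (\<lambda>\<omega>. \<exists>l\<in>{..<k}. pos \<omega> l < pos \<omega> j)"
    using less by (intro pred_intros_finite(4)) auto
  then show ?thesis
    unfolding left_part_eq_Max[OF \<open>j < k\<close>] Bex_def[symmetric] lessThan_iff[symmetric]
    using assms less
    by (intro measurable_If borel_measurable_divide borel_measurable_diff borel_measurable_Max
        borel_measurable_Min measurable_const) auto
qed

lemma measurable_right_part:
  assumes "j < k" and pos: "\<And>l. l < k \<Longrightarrow> (\<lambda>\<omega>. pos \<omega> l) \<in> borel_measurable M"
  shows "(\<lambda>\<omega>. right_part k (pos \<omega>) (pos \<omega> j)) \<in> borel_measurable M"
proof -
  have "(\<lambda>\<omega>. left_part k (\<lambda>l. 1 - pos \<omega> l) (1 - pos \<omega> j)) \<in> borel_measurable M"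
    using measurable_left_part[of j k "\<lambda>\<omega> l. 1 - pos \<omega> l"] assms by simp
  then show ?thesis by (simp add: left_part_reflect)
qed

text \<open>Tie-breaking choices re-indexed by candidates: the pair \<open>\<tau> i\<close> is chosen at the point
  \<open>pos i\<close>, so that the index set no longer depends on the positions.\<close>

definition consistent_choice :: "nat \<Rightarrow> (nat \<Rightarrow> real) \<Rightarrow> (nat \<Rightarrow> nat \<times> nat) \<Rightarrow> bool" where
  "consistent_choice k pos \<tau> \<longleftrightarrow>
     (\<forall>i<k. \<tau> i \<in> tb_pairs k pos (pos i)) \<and> (\<forall>i<k. \<forall>j<k. pos i = pos j \<longrightarrow> \<tau> i = \<tau> j)"

definition index_share :: "nat \<Rightarrow> (nat \<Rightarrow> real) \<Rightarrow> (nat \<Rightarrow> nat \<times> nat) \<Rightarrow> nat \<Rightarrow> real" where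
  "index_share k pos \<tau> j =
     (if fst (\<tau> j) = j then left_part k pos (pos j) else 0) +
     (if snd (\<tau> j) = j then right_part k pos (pos j) else 0)"

definition index_winner :: "nat \<Rightarrow> (nat \<Rightarrow> real) \<Rightarrow> (nat \<Rightarrow> nat \<times> nat) \<Rightarrow> nat \<Rightarrow> bool" where
  "index_winner k pos \<tau> i \<longleftrightarrow> (\<forall>j<k. index_share k pos \<tau> j \<le> index_share k pos \<tau> i)"

lemma pred_consistent_choice:
  assumes pos: "\<And>l. l < k \<Longrightarrow> (\<lambda>\<omega>. pos \<omega> l) \<in> borel_measurable M"
  shows "Measurable.pred M (\<lambda>\<omega>. consistent_choice k (pos \<omega>) \<tau>)"
proof -
  have eq: "Measurable.pred M (\<lambda>\<omega>. pos \<omega> a = pos \<omega> b)" if "a < k" "b < k" for a b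
    unfolding Measurable.pred_def using that pos by (intro borel_measurable_eq) auto
  have "consistent_choice k (pos \<omega>) \<tau> \<longleftrightarrow>
     (\<forall>i\<in>{..<k}. (fst (\<tau> i) < k \<and> snd (\<tau> i) < k) \<and>
        (pos \<omega> (fst (\<tau> i)) = pos \<omega> i \<and> pos \<omega> (snd (\<tau> i)) = pos \<omega> i \<and>
        (fst (\<tau> i) \<noteq> snd (\<tau> i) \<or> (\<forall>l\<in>{..<k}. pos \<omega> l = pos \<omega> i \<longrightarrow> l = i)))) \<and>
     (\<forall>i\<in>{..<k}. \<forall>j\<in>{..<k}. pos \<omega> i = pos \<omega> j \<longrightarrow> \<tau> i = \<tau> j)" for \<omega>
  proof -
    have "\<tau> i \<in> tb_pairs k (pos \<omega>) (pos \<omega> i) \<longleftrightarrow> fst (\<tau> i) < k \<and> snd (\<tau> i) < k \<and>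
        pos \<omega> (fst (\<tau> i)) = pos \<omega> i \<and> pos \<omega> (snd (\<tau> i)) = pos \<omega> i \<and>
        (fst (\<tau> i) \<noteq> snd (\<tau> i) \<or> (\<forall>l<k. pos \<omega> l = pos \<omega> i \<longrightarrow> l = i))" if "i < k" for i
      using tb_pairs_at_iff[OF that, of "fst (\<tau> i)" "snd (\<tau> i)" "pos \<omega>"] by simp
    then show ?thesis unfolding consistent_choice_def by auto
  qed
  note alt = this
  show ?thesis
    unfolding alt
    apply (rule pred_intros_logic(3))
     apply (rule pred_intros_finite(3), simp)
     apply (rule pred_intros_conj1')
     apply (rule pred_intros_logic(3), rule eq, simp, simp)
     apply (rule pred_intros_logic(3), rule eq, simp, simp)
     apply (rule pred_intros_disj1')
     apply (rule pred_intros_finite(3), simp)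
     apply (rule pred_intros_logic(4), rule eq, simp, simp, simp)
    apply (rule pred_intros_finite(3), simp)
    apply (rule pred_intros_finite(3), simp)
    apply (rule pred_intros_logic(4), rule eq, simp, simp, simp)
    done
qed

lemma pred_index_winner:
  assumes "i < k" and pos: "\<And>l. l < k \<Longrightarrow> (\<lambda>\<omega>. pos \<omega> l) \<in> borel_measurable M"
  shows "Measurable.pred M (\<lambda>\<omega>. index_winner k (pos \<omega>) \<tau> i)"
proof -
  have share: "(\<lambda>\<omega>. index_share k (pos \<omega>) \<tau> j) \<in> borel_measurable M" if "j < k" for j
    unfolding index_share_def
    using measurable_left_part[OF that pos] measurable_right_part[OF that pos] by simp
  have "index_winner k (pos \<omega>) \<tau> i \<longleftrightarrow>
      (\<forall>j\<in>{..<k}. index_share k (pos \<omega>) \<tau> j \<le> index_share k (pos \<omega>) \<tau> i)" for \<omega>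
    unfolding index_winner_def by auto
  moreover have "Measurable.pred M (\<lambda>\<omega>. index_share k (pos \<omega>) \<tau> j \<le> index_share k (pos \<omega>) \<tau> i)"
    if "j < k" for j
    unfolding Measurable.pred_def using share that \<open>i < k\<close> by (intro borel_measurable_le)
  ultimately show ?thesis by (simp only:) (intro pred_intros_finite(3); simp)
qed

definition index_choice :: "nat \<Rightarrow> (nat \<Rightarrow> real) \<Rightarrow> (real \<Rightarrow> nat \<times> nat) \<Rightarrow> nat \<Rightarrow> nat \<times> nat" where
  "index_choice k pos \<sigma> = (\<lambda>i\<in>{..<k}. \<sigma> (pos i))"

definition candidate_at :: "nat \<Rightarrow> (nat \<Rightarrow> real) \<Rightarrow> real \<Rightarrow> nat" where
  "candidate_at k pos q = (SOME i. i < k \<and> pos i = q)"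

definition point_choice :: "nat \<Rightarrow> (nat \<Rightarrow> real) \<Rightarrow> (nat \<Rightarrow> nat \<times> nat) \<Rightarrow> real \<Rightarrow> nat \<times> nat" where
  "point_choice k pos \<tau> = (\<lambda>q\<in>occupied k pos. \<tau> (candidate_at k pos q))"

lemma candidate_at:
  assumes "q \<in> occupied k pos"
  shows "candidate_at k pos q < k" "pos (candidate_at k pos q) = q"
  using someI_ex[of "\<lambda>i. i < k \<and> pos i = q"] assms
  unfolding candidate_at_def occupied_def by auto

lemma index_choice_consistent:
  assumes "\<sigma> \<in> tb_choices k pos"
  shows "index_choice k pos \<sigma> \<in> {..<k} \<rightarrow>\<^sub>E {..<k} \<times> {..<k}"
    and "consistent_choice k pos (index_choice k pos \<sigma>)"
proof -
  have in_pairs: "\<sigma> (pos i) \<in> tb_pairs k pos (pos i)" if "i < k" for i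
    using tb_choice_in_tb_pairs[OF assms that] .
  moreover have "tb_pairs k pos p \<subseteq> {..<k} \<times> {..<k}" for p
    unfolding tb_pairs_def by auto
  ultimately show "index_choice k pos \<sigma> \<in> {..<k} \<rightarrow>\<^sub>E {..<k} \<times> {..<k}"
    unfolding index_choice_def by (subst restrict_PiE_iff) blast
  show "consistent_choice k pos (index_choice k pos \<sigma>)"
    unfolding consistent_choice_def index_choice_def using in_pairs by simp
qed

lemma point_choice_in_tb_choices:
  assumes "consistent_choice k pos \<tau>"
  shows "point_choice k pos \<tau> \<in> tb_choices k pos"
proof -
  have "\<tau> (candidate_at k pos q) \<in> tb_pairs k pos (pos (candidate_at k pos q))"
    if "q \<in> occupied k pos" for q
    using assms candidate_at(1)[OF that] unfolding consistent_choice_def by blast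
  then show ?thesis
    unfolding tb_choices_def point_choice_def by (simp add: candidate_at(2))
qed

lemma point_choice_index_choice:
  assumes "\<sigma> \<in> tb_choices k pos"
  shows "point_choice k pos (index_choice k pos \<sigma>) = \<sigma>"
proof
  fix q show "point_choice k pos (index_choice k pos \<sigma>) q = \<sigma> q"
    using assms candidate_at[of q k pos] unfolding tb_choices_def point_choice_def index_choice_def
    by (cases "q \<in> occupied k pos") (auto simp: PiE_def extensional_def)
qed

lemma index_choice_point_choice:
  assumes "\<tau> \<in> {..<k} \<rightarrow>\<^sub>E {..<k} \<times> {..<k}" "consistent_choice k pos \<tau>"
  shows "index_choice k pos (point_choice k pos \<tau>) = \<tau>"
proof
  fix i show "index_choice k pos (point_choice k pos \<tau>) i = \<tau> i"
  proof (cases "i < k")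
    case True
    then have "pos i \<in> occupied k pos" by (simp add: occupied_def)
    then have "\<tau> (candidate_at k pos (pos i)) = \<tau> i"
      using assms(2) candidate_at True unfolding consistent_choice_def by blast
    then show ?thesis using True \<open>pos i \<in> occupied k pos\<close>
      by (simp add: index_choice_def point_choice_def)
  next
    case False
    then show ?thesis using assms(1) by (simp add: index_choice_def PiE_def extensional_def)
  qed
qed

lemma bij_betw_index_choice:
  "bij_betw (index_choice k pos) (tb_choices k pos)
     {\<tau> \<in> {..<k} \<rightarrow>\<^sub>E {..<k} \<times> {..<k}. consistent_choice k pos \<tau>}"
proof (rule bij_betw_byWitness[where f' = "point_choice k pos"])
  show "\<forall>\<sigma>\<in>tb_choices k pos. point_choice k pos (index_choice k pos \<sigma>) = \<sigma>"
    using point_choice_index_choice by blast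
  show "\<forall>\<tau>\<in>{\<tau> \<in> {..<k} \<rightarrow>\<^sub>E {..<k} \<times> {..<k}. consistent_choice k pos \<tau>}.
      index_choice k pos (point_choice k pos \<tau>) = \<tau>"
    using index_choice_point_choice by blast
  show "index_choice k pos ` tb_choices k pos
      \<subseteq> {\<tau> \<in> {..<k} \<rightarrow>\<^sub>E {..<k} \<times> {..<k}. consistent_choice k pos \<tau>}"
    using index_choice_consistent by blast
  show "point_choice k pos ` {\<tau> \<in> {..<k} \<rightarrow>\<^sub>E {..<k} \<times> {..<k}. consistent_choice k pos \<tau>}
      \<subseteq> tb_choices k pos"
    using point_choice_in_tb_choices by blast
qed

lemma card_eq_sum_indicator: "real (card {i. i < (k::nat) \<and> P i}) = (\<Sum>i<k. if P i then 1 else 0)"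
proof -
  have "{i. i < k \<and> P i} = {i \<in> {..<k}. P i}" by auto
  then have "real (card {i. i < k \<and> P i}) = (\<Sum>i\<in>{i \<in> {..<k}. P i}. 1)" by simp
  also have "\<dots> = (\<Sum>i<k. if P i then 1 else 0)" by (rule sum.inter_filter) simp
  finally show ?thesis .
qed

lemma win_prob_eq_index_sum:
  assumes "i < k"
  shows "win_prob k pos i =
    (\<Sum>\<tau>\<in>{..<k} \<rightarrow>\<^sub>E {..<k} \<times> {..<k}. if consistent_choice k pos \<tau> then
       (if index_winner k pos \<tau> i then 1 / (\<Sum>l<k. if index_winner k pos \<tau> l then 1 else 0) else 0)
       else 0) /
    (\<Sum>\<tau>\<in>{..<k} \<rightarrow>\<^sub>E {..<k} \<times> {..<k}. if consistent_choice k pos \<tau> then 1 else 0)"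
proof -
  let ?restr = "index_choice k pos"
  let ?T = "{\<tau> \<in> {..<k} \<rightarrow>\<^sub>E {..<k} \<times> {..<k}. consistent_choice k pos \<tau>}"
  let ?w = "\<lambda>\<tau>. if index_winner k pos \<tau> i then 1 / (\<Sum>l<k. if index_winner k pos \<tau> l then 1 else 0) else 0"
  have "share k pos \<sigma> j = index_share k pos (?restr \<sigma>) j" if "j < k" for \<sigma> j
    using that unfolding share_def index_share_def index_choice_def by simp
  then have W: "winners k pos \<sigma> = {l. l < k \<and> index_winner k pos (?restr \<sigma>) l}" for \<sigma>
    unfolding winners_def index_winner_def by auto
  have "(\<Sum>\<sigma>\<in>tb_choices k pos. if i \<in> winners k pos \<sigma> then 1 / real (card (winners k pos \<sigma>)) else 0)
      = (\<Sum>\<sigma>\<in>tb_choices k pos. ?w (?restr \<sigma>))"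
    unfolding W card_eq_sum_indicator using assms by simp
  also have "\<dots> = (\<Sum>\<tau>\<in>?T. ?w \<tau>)"
    by (rule sum.reindex_bij_betw[OF bij_betw_index_choice])
  also have "\<dots> = (\<Sum>\<tau>\<in>{..<k} \<rightarrow>\<^sub>E {..<k} \<times> {..<k}. if consistent_choice k pos \<tau> then ?w \<tau> else 0)"
    by (rule sum.inter_filter) (simp add: finite_PiE)
  moreover have "real (card (tb_choices k pos)) = (\<Sum>\<tau>\<in>?T. 1)"
    using bij_betw_same_card[OF bij_betw_index_choice] by simp
  moreover have "\<dots> = (\<Sum>\<tau>\<in>{..<k} \<rightarrow>\<^sub>E {..<k} \<times> {..<k}. if consistent_choice k pos \<tau> then 1 else 0)"
    by (rule sum.inter_filter) (simp add: finite_PiE)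
  ultimately show ?thesis unfolding win_prob_def by simp
qed

lemma measurable_win_prob:
  assumes "i < k" and pos: "\<And>l. l < k \<Longrightarrow> (\<lambda>\<omega>. pos \<omega> l) \<in> borel_measurable M"
  shows "(\<lambda>\<omega>. win_prob k (pos \<omega>) i) \<in> borel_measurable M"
  unfolding win_prob_eq_index_sum[OF \<open>i < k\<close>]
  using pred_consistent_choice[OF pos] pred_index_winner[OF _ pos] \<open>i < k\<close>
  by (intro borel_measurable_divide borel_measurable_sum measurable_If measurable_const)
    (auto simp: Measurable.pred_def)

section \<open>The winner distribution\<close>

definition win_mass :: "nat \<Rightarrow> real set \<Rightarrow> (nat \<Rightarrow> real) \<Rightarrow> real" where
  "win_mass k A pos = (\<Sum>i<k. win_prob k pos i * indicator A (pos i))"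

lemma win_mass_nonneg: "0 \<le> win_mass k A pos"
  unfolding win_mass_def by (intro sum_nonneg mult_nonneg_nonneg win_prob_nonneg) auto

lemma win_mass_le_1:
  assumes "0 < k" shows "win_mass k A pos \<le> 1"
proof -
  have "win_mass k A pos \<le> (\<Sum>i<k. win_prob k pos i)"
    unfolding win_mass_def by (intro sum_mono mult_right_le_one_le win_prob_nonneg) auto
  then show ?thesis using sum_win_prob[OF assms] by simp
qed

lemma win_mass_UNIV: "0 < k \<Longrightarrow> win_mass k UNIV pos = 1"
  unfolding win_mass_def by (simp add: sum_win_prob)

lemma measurable_win_mass:
  assumes "sets F = sets borel" "A \<in> sets borel"
  shows "win_mass k A \<in> borel_measurable (PiM {..<k} (\<lambda>_. F))"
proof -
  have component: "(\<lambda>pos. pos l) \<in> borel_measurable (PiM {..<k} (\<lambda>_. F))" if "l < k" for l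
    using measurable_component_singleton[of l "{..<k}" "\<lambda>_. F"] that
      measurable_cong_sets[OF refl assms(1), of "PiM {..<k} (\<lambda>_. F)"] by auto
  have "(\<lambda>pos. indicator A (pos i) :: real) \<in> borel_measurable (PiM {..<k} (\<lambda>_. F))" if "i < k" for i
    using measurable_compose[OF component[OF that] borel_measurable_indicator[OF assms(2)]] .
  then show ?thesis
    unfolding win_mass_def[abs_def] using measurable_win_prob[OF _ component]
    by (intro borel_measurable_sum borel_measurable_times) auto
qed

lemma ennreal_win_mass:
  "ennreal (win_mass k A pos) = (\<Sum>i<k. ennreal (win_prob k pos i) * indicator A (pos i))"
proof -
  have "ennreal (win_mass k A pos) = (\<Sum>i<k. ennreal (win_prob k pos i * indicator A (pos i)))"
    unfolding win_mass_def by (rule sum_ennreal[symmetric]) (simp add: win_prob_nonneg)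
  also have "\<dots> = (\<Sum>i<k. ennreal (win_prob k pos i) * indicator A (pos i))"
    by (rule sum.cong) (auto simp: indicator_def)
  finally show ?thesis .
qed

lemma emeasure_winner_dist:
  assumes "sets F = sets borel" "A \<in> sets borel"
  shows "emeasure (winner_dist k F) A = (\<integral>\<^sup>+pos. ennreal (win_mass k A pos) \<partial>PiM {..<k} (\<lambda>_. F))"
proof -
  let ?\<mu> = "\<lambda>A. \<integral>\<^sup>+pos. ennreal (win_mass k A pos) \<partial>PiM {..<k} (\<lambda>_. F)"
  have additive: "countably_additive (sets borel) ?\<mu>"
  proof (rule countably_additiveI)
    fix B :: "nat \<Rightarrow> real set" assume B: "range B \<subseteq> sets borel" "disjoint_family B"
    have "(\<Sum>n. ennreal (win_mass k (B n) pos)) = ennreal (win_mass k (\<Union>n. B n) pos)" for pos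
    proof -
      have "(\<Sum>n. ennreal (win_mass k (B n) pos)) =
          (\<Sum>i<k. \<Sum>n. ennreal (win_prob k pos i) * indicator (B n) (pos i))"
        unfolding ennreal_win_mass by (rule suminf_sum) simp
      also have "\<dots> = ennreal (win_mass k (\<Union>n. B n) pos)"
        unfolding ennreal_win_mass by (simp add: suminf_indicator[OF B(2)])
      finally show ?thesis .
    qed
    moreover have "win_mass k (B n) \<in> borel_measurable (PiM {..<k} (\<lambda>_. F))" for n
      using B(1) assms(1) by (intro measurable_win_mass) auto
    ultimately show "(\<Sum>n. ?\<mu> (B n)) = ?\<mu> (\<Union>n. B n)"
      by (subst nn_integral_suminf[symmetric]) auto
  qed
  have "sigma_algebra UNIV (sets borel)"
    using sets.sigma_algebra_axioms[of borel] by simp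
  moreover have "positive (sets borel) ?\<mu>" unfolding positive_def win_mass_def by simp
  ultimately show ?thesis
    unfolding winner_dist_def win_mass_def[symmetric]
    by (rule emeasure_measure_of_sigma[OF _ _ additive assms(2)])
qed

lemma sets_winner_dist: "sets (winner_dist k F) = sets borel"
  unfolding winner_dist_def by (simp add: sets.sigma_sets_eq[of borel, simplified])

lemma space_winner_dist: "space (winner_dist k F) = UNIV"
  unfolding winner_dist_def by (rule space_measure_of) simp

lemma prob_space_winner_dist:
  assumes "prob_space F" "sets F = sets borel" "0 < k"
  shows "prob_space (winner_dist k F)"
proof
  have "prob_space (PiM {..<k} (\<lambda>_. F))" using assms(1) by (intro prob_space_PiM) auto
  then show "emeasure (winner_dist k F) (space (winner_dist k F)) = 1"
    using emeasure_winner_dist[OF assms(2), of UNIV k] assms(3)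
    by (simp add: space_winner_dist win_mass_UNIV prob_space.emeasure_space_1)
qed

lemma measure_winner_dist:
  assumes "prob_space F" "sets F = sets borel" "A \<in> sets borel" "0 < k"
  shows "measure (winner_dist k F) A = (\<integral>pos. win_mass k A pos \<partial>PiM {..<k} (\<lambda>_. F))"
proof -
  interpret P: prob_space "PiM {..<k} (\<lambda>_. F)" using assms(1) by (intro prob_space_PiM) auto
  have "integrable (PiM {..<k} (\<lambda>_. F)) (win_mass k A)"
    using measurable_win_mass[OF assms(2,3)] win_mass_nonneg win_mass_le_1[OF assms(4)]
    by (intro P.integrable_const_bound[where B=1]) auto
  then show ?thesis
    using emeasure_winner_dist[OF assms(2,3)]
    by (simp add: measure_def nn_integral_eq_integral win_mass_nonneg integral_nonneg_AE)
qed

definition symmetric_borel_prob :: "real measure \<Rightarrow> bool" where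
  "symmetric_borel_prob F \<longleftrightarrow>
     prob_space F \<and> sets F = sets borel \<and> distr F borel (\<lambda>y. 1 - y) = F"

lemma measure_reflect_singleton:
  assumes "symmetric_borel_prob F"
  shows "measure F {1 - x} = measure F {x}"
proof -
  have sets: "sets F = sets borel" and sym: "distr F borel (\<lambda>y. 1 - y) = F"
    using assms by (auto simp: symmetric_borel_prob_def)
  have "(\<lambda>y::real. 1 - y) \<in> measurable F borel"
    by (subst measurable_cong_sets[OF sets refl]) simp
  then have "measure F {1 - x} = measure F ((\<lambda>y. 1 - y) -` {1 - x} \<inter> space F)"
    by (subst (1) sym[symmetric]) (simp add: measure_distr)
  also have "(\<lambda>y::real. 1 - y) -` {1 - x} \<inter> space F = {x}"
    using sets_eq_imp_space_eq[OF sets] by auto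
  finally show ?thesis .
qed

lemma measure_pair_reflect:
  assumes "symmetric_borel_prob F" "x \<noteq> 1/2"
  shows "measure F {x, 1 - x} = 2 * measure F {x}"
proof -
  interpret prob_space F using assms(1) by (simp add: symmetric_borel_prob_def)
  have "measure F ({x} \<union> {1 - x}) = measure F {x} + measure F {1 - x}"
    using assms by (intro finite_measure_Union) (auto simp: symmetric_borel_prob_def)
  then show ?thesis using measure_reflect_singleton[OF assms(1)] by (simp add: insert_commute)
qed

lemma measure_singleton_le_half:
  assumes "symmetric_borel_prob F" "x \<noteq> 1/2"
  shows "measure F {x} \<le> 1/2"
proof -
  interpret prob_space F using assms(1) by (simp add: symmetric_borel_prob_def)
  show ?thesis using measure_pair_reflect[OF assms] prob_le_1[of "{x, 1 - x}"] by simp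
qed

lemma distr_PiM_reflect:
  fixes k :: nat
  assumes "symmetric_borel_prob F"
  shows "distr (PiM {..<k} (\<lambda>_. F)) (PiM {..<k} (\<lambda>_. F)) (\<lambda>pos. \<lambda>j\<in>{..<k}. 1 - pos j)
    = PiM {..<k} (\<lambda>_. F)"
proof -
  have "prob_space F" and sets: "sets F = sets borel" and sym: "distr F borel (\<lambda>y. 1 - y) = F"
    using assms by (auto simp: symmetric_borel_prob_def)
  have meas: "(\<lambda>y::real. 1 - y) \<in> measurable F F"
    by (subst measurable_cong_sets[OF sets sets]) simp
  have "distr F F (\<lambda>y. 1 - y) = distr F borel (\<lambda>y. 1 - y)"
    by (rule distr_cong) (simp_all add: sets)
  then have reflect: "distr F F (\<lambda>y. 1 - y) = F" using sym by simp
  have "(\<lambda>pos. \<lambda>j\<in>{..<k}. 1 - pos j) = compose {..<k} (\<lambda>y. 1 - y)"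
    by (auto simp: compose_def)
  then have "distr (PiM {..<k} (\<lambda>_. F)) (PiM {..<k} (\<lambda>_. F)) (\<lambda>pos. \<lambda>j\<in>{..<k}. 1 - pos j)
      = distr (PiM {..<k} (\<lambda>_. F)) (PiM {..<k} (\<lambda>_. F)) (compose {..<k} (\<lambda>y. 1 - y))"
    by (rule arg_cong)
  also have "\<dots> = PiM {..<k} (\<lambda>_. distr F F (\<lambda>y. 1 - y))"
    using \<open>prob_space F\<close> meas by (intro distr_PiM_finite_prob_space') auto
  finally show ?thesis unfolding reflect .
qed

lemma win_mass_reflect:
  "win_mass k A (\<lambda>j\<in>{..<k}. 1 - pos j) = win_mass k ((\<lambda>y. 1 - y) -` A) pos"
proof -
  have "win_prob k (\<lambda>j\<in>{..<k}. 1 - pos j) i = win_prob k pos i" for i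
    using win_prob_cong[of k "\<lambda>j\<in>{..<k}. 1 - pos j" "\<lambda>j. 1 - pos j" i] win_prob_reflect by simp
  then show ?thesis unfolding win_mass_def by (intro sum.cong) (auto simp: indicator_def)
qed

lemma symmetric_borel_prob_winner_dist:
  assumes "symmetric_borel_prob F" "0 < k"
  shows "symmetric_borel_prob (winner_dist k F)"
proof -
  let ?P = "PiM {..<k} (\<lambda>_. F)"
  have "prob_space F" and sets: "sets F = sets borel"
    using assms by (auto simp: symmetric_borel_prob_def)
  have reflect_meas: "(\<lambda>pos. \<lambda>j\<in>{..<k}. 1 - pos j) \<in> measurable ?P ?P"
  proof (rule measurable_restrict)
    fix j :: nat assume "j \<in> {..<k}"
    then have "(\<lambda>pos. pos j) \<in> measurable ?P F" by (rule measurable_component_singleton)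
    then show "(\<lambda>pos. 1 - pos j) \<in> measurable ?P F"
      using measurable_cong_sets[OF refl sets, of ?P] by simp
  qed
  have "emeasure (distr (winner_dist k F) borel (\<lambda>y. 1 - y)) A = emeasure (winner_dist k F) A"
    if A: "A \<in> sets borel" for A
  proof -
    have "(\<lambda>y::real. 1 - y) -` A \<inter> space borel \<in> sets borel"
      by (rule measurable_sets[OF _ A]) simp
    then have A': "(\<lambda>y::real. 1 - y) -` A \<in> sets borel" by simp
    have "(\<lambda>y::real. 1 - y) \<in> measurable (winner_dist k F) borel"
      by (subst measurable_cong_sets[OF sets_winner_dist refl]) simp
    then have "emeasure (distr (winner_dist k F) borel (\<lambda>y. 1 - y)) A
        = emeasure (winner_dist k F) ((\<lambda>y. 1 - y) -` A)"
      using A by (simp add: emeasure_distr space_winner_dist)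
    also have "\<dots> = (\<integral>\<^sup>+pos. ennreal (win_mass k A (\<lambda>j\<in>{..<k}. 1 - pos j)) \<partial>?P)"
      by (simp add: emeasure_winner_dist[OF sets A'] win_mass_reflect)
    also have "\<dots> = (\<integral>\<^sup>+pos. ennreal (win_mass k A pos) \<partial>distr ?P ?P (\<lambda>pos. \<lambda>j\<in>{..<k}. 1 - pos j))"
      by (rule nn_integral_distr[OF reflect_meas, symmetric])
        (unfold distr_PiM_reflect[OF assms(1)],
         rule measurable_compose[OF measurable_win_mass[OF sets A] measurable_ennreal])
    also have "\<dots> = emeasure (winner_dist k F) A"
      by (simp add: distr_PiM_reflect[OF assms(1)] emeasure_winner_dist[OF sets A])
    finally show ?thesis .
  qed
  then have "distr (winner_dist k F) borel (\<lambda>y. 1 - y) = winner_dist k F"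
    by (intro measure_eqI) (simp_all add: sets_winner_dist)
  then show ?thesis
    using prob_space_winner_dist[OF \<open>prob_space F\<close> sets assms(2)]
    by (simp add: symmetric_borel_prob_def sets_winner_dist)
qed

section \<open>Growth of the atoms at x and 1 - x\<close>

definition box_except :: "nat \<Rightarrow> nat \<Rightarrow> real set \<Rightarrow> real set \<Rightarrow> (nat \<Rightarrow> real) set" where
  "box_except k j C D = PiE {..<k} (\<lambda>i. if i = j then C else D)"

definition lone_outsider_event :: "nat \<Rightarrow> real \<Rightarrow> nat \<Rightarrow> (nat \<Rightarrow> real) set" where
  "lone_outsider_event k x j = box_except k j (- {x, 1 - x}) {x, 1 - x} -
     (box_except k j (- {x, 1 - x}) {x} \<union> box_except k j (- {x, 1 - x}) {1 - x})"

lemma lone_outsider_of_event: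
  assumes "pos \<in> lone_outsider_event k x j" "j < k" "x < 1/2"
  shows "lone_outsider k pos x j"
proof
  have box: "pos \<in> box_except k j (- {x, 1 - x}) {x, 1 - x}"
    and not_x: "pos \<notin> box_except k j (- {x, 1 - x}) {x}"
    and not_1x: "pos \<notin> box_except k j (- {x, 1 - x}) {1 - x}"
    using assms(1) by (auto simp: lone_outsider_event_def)
  show "pos j \<notin> {x, 1 - x}"
    using PiE_mem[OF box[unfolded box_except_def], of j] assms(2) by simp
  show others: "pos i \<in> {x, 1 - x}" if "i < k" "i \<noteq> j" for i
    using PiE_mem[OF box[unfolded box_except_def], of i] that by simp
  have "pos \<in> extensional {..<k}" using box by (simp add: box_except_def PiE_def)
  have other_value: "\<exists>i<k. i \<noteq> j \<and> pos i \<noteq> z" if "pos \<notin> box_except k j (- {x, 1 - x}) {z}" for z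
  proof -
    have "\<not> (\<forall>i\<in>{..<k}. pos i \<in> (if i = j then - {x, 1 - x} else {z}))"
      using that \<open>pos \<in> extensional {..<k}\<close> unfolding box_except_def PiE_iff by blast
    then obtain i where "i < k" "pos i \<notin> (if i = j then - {x, 1 - x} else {z})" by blast
    then show ?thesis using \<open>pos j \<notin> {x, 1 - x}\<close> by (cases "i = j") auto
  qed
  show "x \<in> occupied k pos"
  proof -
    obtain i where "i < k" "i \<noteq> j" "pos i \<noteq> 1 - x" using other_value[OF not_1x] by blast
    then have "pos i = x" using others[of i] by simp
    then show ?thesis using \<open>i < k\<close> unfolding occupied_def by force
  qed
  show "1 - x \<in> occupied k pos"
  proof -
    obtain i where "i < k" "i \<noteq> j" "pos i \<noteq> x" using other_value[OF not_x] by blast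
    then have "pos i = 1 - x" using others[of i] by simp
    then show ?thesis using \<open>i < k\<close> unfolding occupied_def by force
  qed
qed (use assms in auto)

lemma win_mass_ge_indicators:
  assumes "1/4 < x" "x < 1/2" "0 < k"
  shows "indicator ({..<k} \<rightarrow>\<^sub>E {x, 1 - x}) pos + (\<Sum>j<k. indicator (lone_outsider_event k x j) pos)
    \<le> win_mass k {x, 1 - x} pos"
proof -
  let ?S = "{x, 1 - x}"
  have mass_1: "win_mass k ?S pos = 1" if "\<And>i. i < k \<Longrightarrow> pos i \<notin> ?S \<Longrightarrow> win_prob k pos i = 0"
  proof -
    have "win_mass k ?S pos = (\<Sum>i<k. win_prob k pos i)"
      unfolding win_mass_def using that by (intro sum.cong) (auto simp: indicator_def)
    then show ?thesis using sum_win_prob[OF assms(3)] by simp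
  qed
  have lone: "lone_outsider k pos x j" if "pos \<in> lone_outsider_event k x j" "j < k" for j
    using lone_outsider_of_event that assms by blast
  consider (all_in) "pos \<in> {..<k} \<rightarrow>\<^sub>E ?S" | (outsider) j where "j < k" "pos \<in> lone_outsider_event k x j"
    | (neither) "pos \<notin> {..<k} \<rightarrow>\<^sub>E ?S" "\<And>j. j < k \<Longrightarrow> pos \<notin> lone_outsider_event k x j"
    by blast
  then show ?thesis
  proof cases
    case all_in
    then have "pos \<notin> lone_outsider_event k x j" if "j < k" for j
      using lone_outsider.outside[OF lone] that by (fastforce simp: PiE_iff)
    then show ?thesis using all_in mass_1 by (auto simp: PiE_iff)
  next
    case outsider
    interpret lone_outsider k pos x j by (rule lone[OF outsider(2,1)])
    have "pos \<notin> lone_outsider_event k x j'" if "j' < k" "j' \<noteq> j" for j'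
      using lone_outsider.outside[OF lone] others that outside by blast
    then have "(\<Sum>j'<k. indicator (lone_outsider_event k x j') pos :: real) = 1"
      using outsider by (subst sum.remove[of _ j]) (auto intro!: sum.neutral)
    moreover have "pos \<notin> {..<k} \<rightarrow>\<^sub>E ?S" using outside j by (auto simp: PiE_iff)
    moreover have "win_mass k ?S pos = 1"
      using mass_1 others win_prob_outsider assms(1) by blast
    ultimately show ?thesis by simp
  next
    case neither
    then show ?thesis by (simp add: win_mass_nonneg)
  qed
qed

lemma finite_product_prob_space_lessThan:
  "prob_space F \<Longrightarrow> finite_product_prob_space (\<lambda>_. F) {..<k::nat}"
  by (simp add: finite_product_prob_space_def finite_product_sigma_finite_def product_prob_space_def
      product_prob_space_axioms_def product_sigma_finite_def prob_space_imp_sigma_finite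
      finite_product_sigma_finite_axioms_def)

lemma measure_box_except:
  assumes "prob_space F" "j < k" "C \<in> sets F" "D \<in> sets F"
  shows "measure (PiM {..<k} (\<lambda>_. F)) (box_except k j C D) = measure F C * measure F D ^ (k - 1)"
proof -
  interpret finite_product_prob_space "\<lambda>_. F" "{..<k}"
    using assms(1) by (rule finite_product_prob_space_lessThan)
  have "measure (PiM {..<k} (\<lambda>_. F)) (box_except k j C D) = (\<Prod>i<k. measure F (if i = j then C else D))"
    unfolding box_except_def using assms(3,4) by (intro finite_measure_PiM_emb) auto
  also have "\<dots> = measure F C * (\<Prod>i\<in>{..<k} - {j}. measure F (if i = j then C else D))"
    using assms(2) by (subst prod.remove[of _ j]) auto
  also have "(\<Prod>i\<in>{..<k} - {j}. measure F (if i = j then C else D)) = (\<Prod>i\<in>{..<k} - {j}. measure F D)"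
    by (rule prod.cong) auto
  also have "\<dots> = measure F D ^ (k - 1)"
    using assms(2) by simp
  finally show ?thesis .
qed

lemma measure_lone_outsider_event:
  assumes "prob_space F" "sets F = sets borel" "j < k" "2 \<le> k" "x \<noteq> 1/2"
    and "measure F {x} = p" "measure F {1 - x} = p"
  shows "measure (PiM {..<k} (\<lambda>_. F)) (lone_outsider_event k x j) =
    (1 - 2 * p) * ((2 * p) ^ (k - 1) - 2 * p ^ (k - 1))"
proof -
  interpret F: prob_space F by fact
  interpret P: finite_product_prob_space "\<lambda>_. F" "{..<k}"
    using assms(1) by (rule finite_product_prob_space_lessThan)
  let ?S = "{x, 1 - x}"
  have sets: "?S \<in> sets F" "{x} \<in> sets F" "{1 - x} \<in> sets F" "- ?S \<in> sets F"
    using assms(2) by auto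
  have "measure F ({x} \<union> {1 - x}) = measure F {x} + measure F {1 - x}"
    using sets assms(5) by (intro F.finite_measure_Union) auto
  then have S: "measure F ?S = 2 * p" using assms(6,7) by (simp add: insert_commute)
  have "measure F (- ?S) = 1 - 2 * p"
    using F.prob_compl[OF sets(1)] S sets_eq_imp_space_eq[OF assms(2)] by (simp add: Compl_eq_Diff_UNIV)
  then have boxes: "measure (PiM {..<k} (\<lambda>_. F)) (box_except k j (- ?S) D) = (1 - 2 * p) * measure F D ^ (k - 1)"
    if "D \<in> sets F" for D
    using measure_box_except[OF assms(1,3) sets(4) that] by simp
  have box_sets: "box_except k j C D \<in> sets (PiM {..<k} (\<lambda>_. F))" if "C \<in> sets F" "D \<in> sets F" for C D
    unfolding box_except_def using that by (intro sets_PiM_I_finite) auto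
  define i where "i = (if j = 0 then 1 else (0::nat))"
  have "i < k" "i \<noteq> j" using assms(3,4) by (auto simp: i_def)
  then have "box_except k j (- ?S) {x} \<inter> box_except k j (- ?S) {1 - x} = {}"
    using assms(5) by (force simp: box_except_def PiE_iff)
  then have "measure (PiM {..<k} (\<lambda>_. F)) (box_except k j (- ?S) {x} \<union> box_except k j (- ?S) {1 - x})
      = 2 * ((1 - 2 * p) * p ^ (k - 1))"
    using boxes sets box_sets assms(6,7) by (subst P.finite_measure_Union) auto
  moreover have "box_except k j (- ?S) {x} \<union> box_except k j (- ?S) {1 - x} \<subseteq> box_except k j (- ?S) ?S"
    unfolding box_except_def by (intro Un_least PiE_mono) auto
  ultimately have "measure (PiM {..<k} (\<lambda>_. F)) (lone_outsider_event k x j)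
      = (1 - 2 * p) * (2 * p) ^ (k - 1) - 2 * ((1 - 2 * p) * p ^ (k - 1))"
    unfolding lone_outsider_event_def using boxes[OF sets(1)] S sets box_sets
    by (subst P.finite_measure_Diff) auto
  then show ?thesis by (simp add: algebra_simps)
qed

lemma fp_map_le_measure_winner_dist:
  assumes F: "symmetric_borel_prob F" and x: "1/4 < x" "x < 1/2" and k: "2 \<le> k"
  shows "fp_map k (measure F {x}) \<le> measure (winner_dist k F) {x}"
proof -
  let ?S = "{x, 1 - x}" and ?P = "PiM {..<k} (\<lambda>_. F)"
  define p where "p = measure F {x}"
  have "prob_space F" and sets: "sets F = sets borel" using F by (auto simp: symmetric_borel_prob_def)
  interpret P: finite_product_prob_space "\<lambda>_. F" "{..<k}"
    using \<open>prob_space F\<close> by (rule finite_product_prob_space_lessThan)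
  have p_1x: "measure F {1 - x} = p" using measure_reflect_singleton[OF F] by (simp add: p_def)
  have "x \<noteq> 1/2" using x by simp
  have all_in: "measure ?P ({..<k} \<rightarrow>\<^sub>E ?S) = (2 * p) ^ k"
    using P.finite_measure_PiM_emb[of "\<lambda>_. ?S"] sets measure_pair_reflect[OF F \<open>x \<noteq> 1/2\<close>]
    by (simp add: p_def)
  have lone: "measure ?P (lone_outsider_event k x j) = (1 - 2 * p) * ((2 * p) ^ (k - 1) - 2 * p ^ (k - 1))"
    if "j < k" for j
    using measure_lone_outsider_event[OF \<open>prob_space F\<close> sets that k \<open>x \<noteq> 1/2\<close>] p_1x p_def by simp
  have box_sets: "box_except k j C D \<in> sets ?P" if "C \<in> sets F" "D \<in> sets F" for j C D
    unfolding box_except_def using that by (intro sets_PiM_I_finite) auto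
  have event_sets: "{..<k} \<rightarrow>\<^sub>E ?S \<in> sets ?P" "lone_outsider_event k x j \<in> sets ?P" for j
    unfolding lone_outsider_event_def using sets box_sets
    by (auto intro!: sets_PiM_I_finite sets.Diff sets.Un)
  have "2 * fp_map k p = (2 * p) ^ k + real k * ((1 - 2 * p) * ((2 * p) ^ (k - 1) - 2 * p ^ (k - 1)))"
    unfolding fp_map_def by simp
  also have "\<dots> = measure ?P ({..<k} \<rightarrow>\<^sub>E ?S) + (\<Sum>j<k. measure ?P (lone_outsider_event k x j))"
    by (simp add: all_in lone)
  also have "\<dots> = (\<integral>pos. indicator ({..<k} \<rightarrow>\<^sub>E ?S) pos +
      (\<Sum>j<k. indicator (lone_outsider_event k x j) pos) \<partial>?P)"
    using event_sets by (simp add: P.emeasure_eq_measure)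
  also have "\<dots> \<le> (\<integral>pos. win_mass k ?S pos \<partial>?P)"
  proof (rule integral_mono)
    show "integrable ?P (win_mass k ?S)"
      using measurable_win_mass[OF sets, of ?S] win_mass_nonneg win_mass_le_1 k
      by (intro P.integrable_const_bound[where B=1]) auto
  qed (use event_sets win_mass_ge_indicators[OF x] k in \<open>auto simp: P.emeasure_eq_measure\<close>)
  also have "\<dots> = measure (winner_dist k F) ?S"
    using measure_winner_dist[OF \<open>prob_space F\<close> sets, of ?S k] k by simp
  also have "\<dots> = 2 * measure (winner_dist k F) {x}"
    using symmetric_borel_prob_winner_dist[OF F] k \<open>x \<noteq> 1/2\<close> by (simp add: measure_pair_reflect)
  finally show ?thesis by (simp add: p_def)
qed

section \<open>Convergence of the replicator dynamics\<close>

lemma symmetric_borel_prob_replicator: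
  "0 < k \<Longrightarrow> symmetric_borel_prob F0 \<Longrightarrow> symmetric_borel_prob (replicator k F0 t)"
  by (induction t) (auto simp: replicator_def symmetric_borel_prob_winner_dist)

lemma replicator_atom_tendsto_half:
  assumes "2 \<le> k" and x: "1/4 < x" "x < 1/2" and F0: "symmetric_borel_prob F0"
    and above: "\<And>p. c < p \<Longrightarrow> p < 1/2 \<Longrightarrow> p < fp_map k p" and "c < measure F0 {x}"
  shows "(\<lambda>t. measure (replicator k F0 t) {x}) \<longlonglongrightarrow> 1/2"
proof (rule increasing_orbit_tendsto_fixed_point[OF isCont_fp_map above fp_map_half])
  have sym: "symmetric_borel_prob (replicator k F0 t)" for t
    using symmetric_borel_prob_replicator[OF _ F0] \<open>2 \<le> k\<close> by simp
  show "measure (replicator k F0 t) {x} \<le> 1/2" for t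
    using measure_singleton_le_half[OF sym] x by simp
  show "fp_map k (measure (replicator k F0 t) {x}) \<le> measure (replicator k F0 (Suc t)) {x}" for t
    using fp_map_le_measure_winner_dist[OF sym x \<open>2 \<le> k\<close>] by (simp add: replicator_def)
  show "c < measure (replicator k F0 0) {x}"
    using \<open>c < measure F0 {x}\<close> by (simp add: replicator_def)
qed

theorem mainTheorem20:
  fixes k :: nat
  assumes "k \<ge> 5"
  shows "\<exists>pstar::real. pstar < 1/2 \<and> fp_map k pstar = pstar \<and>
    (\<forall>x F0 p. 1/4 < x \<and> x < 1/2 \<longrightarrow>
       prob_space F0 \<longrightarrow> sets F0 = sets borel \<longrightarrow> measure F0 {0..1} = 1 \<longrightarrow>
       distr F0 borel (\<lambda>y. 1 - y) = F0 \<longrightarrow>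
       measure F0 {x} = p \<longrightarrow> measure F0 {1 - x} = p \<longrightarrow> p > pstar \<longrightarrow>
       ((\<lambda>t. measure (replicator k F0 t) {x}) \<longlonglongrightarrow> 1/2) \<and>
       ((\<lambda>t. measure (replicator k F0 t) {1 - x}) \<longlonglongrightarrow> 1/2))"
proof -
  obtain pstar where pstar: "pstar < 1/2" "fp_map k pstar = pstar"
    and above: "\<And>p. pstar < p \<Longrightarrow> p < 1/2 \<Longrightarrow> p < fp_map k p"
    using fp_map_fixed_point_below_half[OF assms] by blast
  have "(\<lambda>t. measure (replicator k F0 t) {x}) \<longlonglongrightarrow> 1/2 \<and>
      (\<lambda>t. measure (replicator k F0 t) {1 - x}) \<longlonglongrightarrow> 1/2"
    if x: "1/4 < x" "x < 1/2" and F0: "symmetric_borel_prob F0" and "pstar < measure F0 {x}" for x F0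
    using replicator_atom_tendsto_half[OF _ x F0 above] that assms
      measure_reflect_singleton[OF symmetric_borel_prob_replicator[OF _ F0]] by simp
  then show ?thesis
    using pstar by (intro exI[of _ pstar]) (auto simp: symmetric_borel_prob_def)
qed

end
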